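(* Let $\alpha$ be an equidistributed infinite permutation. Then for every positive integer $N$, $\alpha$ has an $N$-maximal element and an $N$-minimal element.
   Context: An infinite permutation is an equivalence class of sequences $(a[n])_{n\ge0}$ of pairwise distinct reals, where two sequences are equivalent if $a[i]<a[j]\iff b[i]<b[j]$ for all $i,j$; write $\alpha=(\alpha[n])_{n\ge0}$ with the induced order. A sequence $(a[n])$ in $[0,1]$ is equidistributed if $\lim_{n\to\infty}\frac{\#\{0\le i<n:a[i]<t\}}{n}=t$ for each $t\in[0,1]$; a permutation is equidistributed if it has an equidistributed representative in $[0,1]$. An element $\alpha[i]$ with $i>N$ is $N$-maximal (resp. $N$-minimal) if $\alpha[i]>\alpha[j]$ (resp. $\alpha[i]<\alpha[j]$) for all $j\in\{i-N,\dots,i+N\}\setminus\{i\}$. *)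

theory Defs
  imports "HOL-Analysis.Analysis"
begin

text \<open>An infinite permutation is represented by any representative sequence
  of pairwise distinct reals; two representatives are equivalent iff they
  induce the same order on indices.\<close>

definition distinct_seq :: "(nat \<Rightarrow> real) \<Rightarrow> bool" where
  "distinct_seq a \<longleftrightarrow> inj a"

definition perm_equiv :: "(nat \<Rightarrow> real) \<Rightarrow> (nat \<Rightarrow> real) \<Rightarrow> bool" where
  "perm_equiv a b \<longleftrightarrow> (\<forall>i j. a i < a j \<longleftrightarrow> b i < b j)"

definition equidistributed_seq :: "(nat \<Rightarrow> real) \<Rightarrow> bool" where
  "equidistributed_seq a \<longleftrightarrow> (\<forall>n. a n \<in> {0..1}) \<and>
     (\<forall>t\<in>{0..1}. (\<lambda>n. real (card {i. i < n \<and> a i < t}) / real n) \<longlonglongrightarrow> t)"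

definition equidistributed_perm :: "(nat \<Rightarrow> real) \<Rightarrow> bool" where
  "equidistributed_perm a \<longleftrightarrow>
     (\<exists>b. distinct_seq b \<and> perm_equiv a b \<and> equidistributed_seq b)"

definition N_maximal :: "nat \<Rightarrow> (nat \<Rightarrow> real) \<Rightarrow> nat \<Rightarrow> bool" where
  "N_maximal N a i \<longleftrightarrow> i > N \<and>
     (\<forall>j\<in>{i - N..i + N} - {i}. a i > a j)"

definition N_minimal :: "nat \<Rightarrow> (nat \<Rightarrow> real) \<Rightarrow> nat \<Rightarrow> bool" where
  "N_minimal N a i \<longleftrightarrow> i > N \<and>
     (\<forall>j\<in>{i - N..i + N} - {i}. a i < a j)"

end

theory Submission
  imports Defs
begin

text \<open>For an equidistributed representative \<open>b\<close> the set \<open>{i. b i < s}\<close> has natural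
  density \<open>s\<close> and \<open>{i. t \<le> b i}\<close> has density \<open>1 - t\<close>. A set of density \<open>d\<close> with
  \<open>0 < d < 1/N\<close> is infinite, yet it must avoid arbitrarily late windows of \<open>N\<close>
  consecutive indices, since otherwise its density would be at least \<open>1/N\<close>. Between two
  such windows there are finitely many members; the one with the largest value is
  \<open>N\<close>-maximal, because every index within distance \<open>N\<close> is either a non-member (with a
  smaller value) or a member between the same two windows.\<close>

definition has_density :: "(nat \<Rightarrow> bool) \<Rightarrow> real \<Rightarrow> bool" where
  "has_density P d \<longleftrightarrow> (\<lambda>n. real (card {i. i < n \<and> P i}) / real n) \<longlonglongrightarrow> d"

lemma has_density_less_if_equidistributed:
  assumes "equidistributed_seq b" and "0 \<le> s" "s \<le> 1"
  shows "has_density (\<lambda>i. b i < s) s"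
  using assms unfolding equidistributed_seq_def has_density_def by auto

lemma has_density_Not:
  assumes "has_density P d"
  shows "has_density (\<lambda>i. \<not> P i) (1 - d)"
proof -
  have "real (card {i. i < n \<and> \<not> P i}) / real n = 1 - real (card {i. i < n \<and> P i}) / real n"
    if "n > 0" for n
  proof -
    have "{i. i < n \<and> P i} \<union> {i. i < n \<and> \<not> P i} = {..<n}" by auto
    moreover have "card ({i. i < n \<and> P i} \<union> {i. i < n \<and> \<not> P i})
        = card {i. i < n \<and> P i} + card {i. i < n \<and> \<not> P i}"
      by (rule card_Un_disjoint) auto
    ultimately have "card {i. i < n \<and> P i} + card {i. i < n \<and> \<not> P i} = n" by simp
    then show ?thesis using that by (simp add: field_simps flip: of_nat_add)
  qed
  then have eq: "\<forall>\<^sub>F n in sequentially. 1 - real (card {i. i < n \<and> P i}) / real n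
      = real (card {i. i < n \<and> \<not> P i}) / real n"
    by (auto intro: eventually_sequentiallyI[of 1])
  have "(\<lambda>n. 1 - real (card {i. i < n \<and> P i}) / real n) \<longlonglongrightarrow> 1 - d"
    using assms unfolding has_density_def by (intro tendsto_intros)
  from this eq show ?thesis unfolding has_density_def by (rule Lim_transform_eventually)
qed

lemma frequently_if_has_density_pos:
  assumes "has_density P d" and "d > 0"
  shows "\<exists>i\<ge>K. P i"
proof (rule ccontr)
  assume "\<not> (\<exists>i\<ge>K. P i)"
  then have "{i. i < n \<and> P i} \<subseteq> {..<K}" for n by (auto simp: not_le)
  then have "card {i. i < n \<and> P i} \<le> K" for n
    by (metis card_lessThan card_mono finite_lessThan)
  then have "\<forall>n. real (card {i. i < n \<and> P i}) / real n \<le> real K / real n"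
    by (simp add: divide_right_mono)
  then have "d \<le> 0"
    using LIMSEQ_le[OF assms(1)[unfolded has_density_def] lim_const_over_n] by blast
  with assms(2) show False by simp
qed

lemma card_ge_if_windows_hit:
  fixes N K k :: nat
  assumes "\<And>g. g \<ge> K \<Longrightarrow> \<exists>j\<in>{g..<g+N}. P j"
  shows "k \<le> card {i. i < K + k * N \<and> P i}"
proof (induction k)
  case 0
  then show ?case by simp
next
  case (Suc k)
  obtain j where j: "j \<in> {K + k * N..<K + k * N + N}" "P j"
    using assms[of "K + k * N"] by auto
  have "Suc (card {i. i < K + k * N \<and> P i}) = card (insert j {i. i < K + k * N \<and> P i})"
    using j by simp
  also have "\<dots> \<le> card {i. i < K + Suc k * N \<and> P i}"
    using j by (intro card_mono) auto
  finally show ?case using Suc.IH by simp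
qed

lemma ratio_windows_tendsto:
  fixes N K :: nat
  assumes "N > 0"
  shows "(\<lambda>k. real k / real (K + k * N)) \<longlonglongrightarrow> 1 / real N"
proof -
  have "(\<lambda>k. inverse (real N + real K / real k)) \<longlonglongrightarrow> inverse (real N + 0)"
    using assms by (intro tendsto_intros lim_const_over_n) auto
  moreover have "inverse (real N + real K / real k) = real k / real (K + k * N)" if "k > 0" for k
    using that by (simp add: field_simps)
  ultimately show ?thesis
    by (simp add: divide_inverse) (rule Lim_transform_eventually,
        auto intro: eventually_sequentiallyI[of 1])
qed

lemma late_gap_if_has_density_less:
  assumes "has_density P d" and "N > 0" and "d < 1 / real N"
  shows "\<exists>g\<ge>K. \<forall>j\<in>{g..<g+N}. \<not> P j"
proof (rule ccontr)
  assume "\<not> ?thesis"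
  then have hit: "\<And>g. g \<ge> K \<Longrightarrow> \<exists>j\<in>{g..<g+N}. P j" by blast
  have "strict_mono (\<lambda>k. K + k * N)"
    using assms(2) by (auto simp: strict_mono_def)
  from LIMSEQ_subseq_LIMSEQ[OF assms(1)[unfolded has_density_def] this]
  have "(\<lambda>k. real (card {i. i < K + k * N \<and> P i}) / real (K + k * N)) \<longlonglongrightarrow> d"
    by (simp add: o_def)
  moreover have "real k / real (K + k * N) \<le> real (card {i. i < K + k * N \<and> P i}) / real (K + k * N)"
    for k
  proof -
    have "k \<le> card {i. i < K + k * N \<and> P i}" by (rule card_ge_if_windows_hit) (rule hit)
    then show ?thesis by (intro divide_right_mono) auto
  qed
  ultimately have "1 / real N \<le> d"
    using LIMSEQ_le[OF ratio_windows_tendsto[OF assms(2)]] by blast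
  with assms(3) show False by simp
qed

lemma N_maximal_if_gaps:
  fixes b :: "nat \<Rightarrow> real"
  assumes "inj b"
    and frequent: "\<And>K. \<exists>i\<ge>K. P i"
    and gap: "\<And>K. \<exists>g\<ge>K. \<forall>j\<in>{g..<g+N}. \<not> P j"
    and dominate: "\<And>i j. P i \<Longrightarrow> \<not> P j \<Longrightarrow> b j < b i"
  shows "\<exists>i. N_maximal N b i"
proof -
  obtain g1 where g1: "g1 \<ge> N + 1" "\<forall>j\<in>{g1..<g1+N}. \<not> P j" using gap by blast
  obtain m where m: "m \<ge> g1 + N" "P m" using frequent by blast
  obtain g2 where g2: "g2 > m" "\<forall>j\<in>{g2..<g2+N}. \<not> P j" using gap[of "Suc m"] by (auto simp: Suc_le_eq)
  define F where "F = {i. g1 + N \<le> i \<and> i < g2 \<and> P i}"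
  have "finite F" unfolding F_def by (rule finite_subset[of _ "{..<g2}"]) auto
  moreover have "m \<in> F" using m g2 unfolding F_def by auto
  ultimately have "Max (b ` F) \<in> b ` F" by (intro Max_in) auto
  then obtain p where pF: "p \<in> F" and p_Max: "b p = Max (b ` F)" by auto
  have greatest: "b q \<le> b p" if "q \<in> F" for q
    unfolding p_Max using \<open>finite F\<close> that by simp
  have p: "P p" "g1 + N \<le> p" "p < g2" using pF unfolding F_def by auto
  have "b j < b p" if j: "j \<in> {p - N..p + N} - {p}" for j
  proof (cases "P j")
    case True
    have "j \<notin> {g1..<g1+N}" "j \<notin> {g2..<g2+N}" using True g1(2) g2(2) by auto
    with j p have "j \<in> F" using True unfolding F_def by auto
    with greatest have "b j \<le> b p" .
    moreover have "b j \<noteq> b p" using \<open>inj b\<close> j by (auto dest: injD)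
    ultimately show ?thesis by simp
  next
    case False
    with dominate p(1) show ?thesis by blast
  qed
  moreover have "p > N" using p(2) g1(1) by simp
  ultimately show ?thesis unfolding N_maximal_def by blast
qed

lemma N_maximal_if_has_density:
  fixes b :: "nat \<Rightarrow> real"
  assumes "inj b" and "has_density P d" and "0 < d" and "N > 0" and "d < 1 / real N"
    and "\<And>i j. P i \<Longrightarrow> \<not> P j \<Longrightarrow> b j < b i"
  shows "\<exists>i. N_maximal N b i"
  using N_maximal_if_gaps[of b P N] assms frequently_if_has_density_pos[OF assms(2,3)]
    late_gap_if_has_density_less[OF assms(2,4,5)] by blast

lemma N_maximal_perm_equiv:
  assumes "perm_equiv a b"
  shows "N_maximal N a i \<longleftrightarrow> N_maximal N b i"
  using assms unfolding perm_equiv_def N_maximal_def by auto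

lemma N_minimal_perm_equiv_uminus:
  assumes "perm_equiv a b"
  shows "N_minimal N a i \<longleftrightarrow> N_maximal N (\<lambda>j. - b j) i"
  using assms unfolding perm_equiv_def N_maximal_def N_minimal_def by auto

theorem proposition2:
  fixes a :: "nat \<Rightarrow> real" and N :: nat
  assumes "distinct_seq a"
    and "equidistributed_perm a"
    and "N > 0"
  shows "(\<exists>i. N_maximal N a i) \<and> (\<exists>i. N_minimal N a i)"
proof -
  obtain b where "inj b" and equiv: "perm_equiv a b" and equi: "equidistributed_seq b"
    using assms(2) unfolding equidistributed_perm_def distinct_seq_def by blast
  define d where "d = 1 / (2 * real N)"
  have d: "0 < d" "d < 1 / real N" "d \<le> 1" using assms(3) by (auto simp: d_def field_simps)
  have "has_density (\<lambda>i. \<not> b i < 1 - d) d"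
    using has_density_Not[OF has_density_less_if_equidistributed[OF equi, of "1 - d"]] d by simp
  then have "\<exists>i. N_maximal N b i"
    by (rule N_maximal_if_has_density[OF \<open>inj b\<close> _ d(1) assms(3) d(2)]) auto
  moreover have "\<exists>i. N_maximal N (\<lambda>i. - b i) i"
  proof (rule N_maximal_if_has_density[OF _ _ d(1) assms(3) d(2)])
    show "inj (\<lambda>i. - b i)" using \<open>inj b\<close> by (simp add: inj_def)
    show "has_density (\<lambda>i. b i < d) d"
      using d by (intro has_density_less_if_equidistributed[OF equi]) auto
  qed auto
  ultimately show ?thesis
    using N_maximal_perm_equiv[OF equiv] N_minimal_perm_equiv_uminus[OF equiv] by blast
qed

end
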